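(* Let $\mathbf{X}=(X_1,\dots,X_d)$ be a random vector such that each $X_i$ is a.s. nonnegative with $0<E(X_i)<\infty$, let $\|\mathbf{x}\|_F=E(\max(|x_0|,|x_1|X_1,\dots,|x_d|X_d))$, let $c_i=E(X_i)$ and $\|(x_0,\dots,x_d)\|_{\infty,\mathbf{c}}:=\max(|x_0|,|x_1|c_1,\dots,|x_d|c_d)$. Then $\|(1,1/c_1,\dots,1/c_d)\|_F=1$ if and only if $\|\cdot\|_F=\|\cdot\|_{\infty,\mathbf{c}}$. *)

theory Defs
  imports "HOL-Probability.Probability"
begin

text \<open>Vectors in R^(d+1) are represented as functions nat => real with indices 0..d.
  The random vector (X_1,...,X_d) is a family X :: nat => 'a => real, used at indices 1..d.\<close>

definition normF :: "'a measure \<Rightarrow> (nat \<Rightarrow> 'a \<Rightarrow> real) \<Rightarrow> nat \<Rightarrow> (nat \<Rightarrow> real) \<Rightarrow> real" where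
  "normF M X d x = integral\<^sup>L M (\<lambda>\<omega>. Max ({\<bar>x 0\<bar>} \<union> {\<bar>x i\<bar> * X i \<omega> | i. i \<in> {1..d}}))"

definition norm_inf_c :: "(nat \<Rightarrow> real) \<Rightarrow> nat \<Rightarrow> (nat \<Rightarrow> real) \<Rightarrow> real" where
  "norm_inf_c c d x = Max ({\<bar>x 0\<bar>} \<union> {\<bar>x i\<bar> * c i | i. i \<in> {1..d}})"

end

theory Submission
  imports Defs
begin

text \<open>Put y = (1, 1/c_1, ..., 1/c_d). The integrand F of the norm of y is pointwise at least 1
  and at least X_i / c_i, and all three have mean 1 when the norm of y is 1. A nonnegative function
  with mean zero vanishes a.s., so F = 1 and X_i = c_i almost surely, and with constant weights the
  two norms coincide. Conversely the sup-norm of y with weights c is 1.\<close>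

definition weighted_max :: "nat \<Rightarrow> (nat \<Rightarrow> real) \<Rightarrow> (nat \<Rightarrow> real) \<Rightarrow> real" where
  "weighted_max d x w = Max ({\<bar>x 0\<bar>} \<union> {\<bar>x i\<bar> * w i | i. i \<in> {1..d}})"

lemma normF_eq_integral_weighted_max:
  "normF M X d x = integral\<^sup>L M (\<lambda>\<omega>. weighted_max d x (\<lambda>i. X i \<omega>))"
  by (simp add: normF_def weighted_max_def)

lemma norm_inf_c_eq_weighted_max: "norm_inf_c c d x = weighted_max d x c"
  by (simp add: norm_inf_c_def weighted_max_def)

lemma abs_first_le_weighted_max: "\<bar>x 0\<bar> \<le> weighted_max d x w"
  unfolding weighted_max_def by (rule Max_ge) auto

lemma weighted_max_nonneg: "0 \<le> weighted_max d x w"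
  using abs_first_le_weighted_max abs_ge_zero order_trans by blast

lemma weighted_term_le_weighted_max: "i \<in> {1..d} \<Longrightarrow> \<bar>x i\<bar> * w i \<le> weighted_max d x w"
  unfolding weighted_max_def by (rule Max_ge) auto

lemma weighted_max_cong:
  assumes "\<And>i. i \<in> {1..d} \<Longrightarrow> w i = w' i"
  shows "weighted_max d x w = weighted_max d x w'"
proof -
  from assms have "{\<bar>x i\<bar> * w i | i. i \<in> {1..d}} = {\<bar>x i\<bar> * w' i | i. i \<in> {1..d}}" by force
  then show ?thesis by (simp add: weighted_max_def)
qed

lemma weighted_max_eq_Max_image:
  "weighted_max d x w = Max ((\<lambda>i. if i = 0 then \<bar>x 0\<bar> else \<bar>x i\<bar> * w i) ` {0..d})"
proof -
  have "{0..d} = insert 0 {1..d}" by auto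
  then have "{\<bar>x 0\<bar>} \<union> {\<bar>x i\<bar> * w i | i. i \<in> {1..d}}
      = (\<lambda>i. if i = 0 then \<bar>x 0\<bar> else \<bar>x i\<bar> * w i) ` {0..d}"
    by (auto simp: image_iff)
  then show ?thesis by (simp add: weighted_max_def)
qed

lemma weighted_max_le_sum: "weighted_max d x w \<le> \<bar>x 0\<bar> + (\<Sum>i\<in>{1..d}. \<bar>x i\<bar> * \<bar>w i\<bar>)"
proof -
  have "\<bar>x i\<bar> * w i \<le> \<bar>x 0\<bar> + (\<Sum>i\<in>{1..d}. \<bar>x i\<bar> * \<bar>w i\<bar>)" if "i \<in> {1..d}" for i
  proof -
    have "\<bar>x i\<bar> * w i \<le> \<bar>x i\<bar> * \<bar>w i\<bar>" by (intro mult_left_mono) auto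
    also have "\<dots> \<le> (\<Sum>i\<in>{1..d}. \<bar>x i\<bar> * \<bar>w i\<bar>)" using that by (intro member_le_sum) auto
    also have "\<dots> \<le> \<bar>x 0\<bar> + (\<Sum>i\<in>{1..d}. \<bar>x i\<bar> * \<bar>w i\<bar>)" by simp
    finally show ?thesis .
  qed
  moreover have "0 \<le> (\<Sum>i\<in>{1..d}. \<bar>x i\<bar> * \<bar>w i\<bar>)" by (intro sum_nonneg) auto
  ultimately show ?thesis unfolding weighted_max_def by (subst Max_le_iff) auto
qed

lemma borel_measurable_weighted_max:
  assumes "\<And>i. i \<in> {1..d} \<Longrightarrow> X i \<in> borel_measurable M"
  shows "(\<lambda>\<omega>. weighted_max d x (\<lambda>i. X i \<omega>)) \<in> borel_measurable M"
  unfolding weighted_max_eq_Max_image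
proof (intro borel_measurable_Max)
  fix i assume "i \<in> {0..d}"
  then show "(\<lambda>\<omega>. if i = 0 then \<bar>x 0\<bar> else \<bar>x i\<bar> * X i \<omega>) \<in> borel_measurable M"
    using assms by (cases "i = 0") auto
qed simp

lemma (in finite_measure) integrable_weighted_max:
  assumes "\<And>i. i \<in> {1..d} \<Longrightarrow> integrable M (X i)"
  shows "integrable M (\<lambda>\<omega>. weighted_max d x (\<lambda>i. X i \<omega>))"
proof (rule Bochner_Integration.integrable_bound)
  show "integrable M (\<lambda>\<omega>. \<bar>x 0\<bar> + (\<Sum>i\<in>{1..d}. \<bar>x i\<bar> * \<bar>X i \<omega>\<bar>))"
    using assms by (intro Bochner_Integration.integrable_add integrable_sum integrable_mult_right integrable_abs) auto
  show "(\<lambda>\<omega>. weighted_max d x (\<lambda>i. X i \<omega>)) \<in> borel_measurable M"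
    using assms by (intro borel_measurable_weighted_max) auto
  show "AE \<omega> in M. norm (weighted_max d x (\<lambda>i. X i \<omega>))
      \<le> norm (\<bar>x 0\<bar> + (\<Sum>i\<in>{1..d}. \<bar>x i\<bar> * \<bar>X i \<omega>\<bar>))"
    using weighted_max_nonneg weighted_max_le_sum
    by (intro AE_I2) (simp add: sum_nonneg)
qed

lemma AE_eq_if_AE_le_integral_eq:
  fixes f g :: "'a \<Rightarrow> real"
  assumes "integrable M f" "integrable M g" "AE \<omega> in M. f \<omega> \<le> g \<omega>"
    and "integral\<^sup>L M f = integral\<^sup>L M g"
  shows "AE \<omega> in M. f \<omega> = g \<omega>"
proof -
  have "AE \<omega> in M. g \<omega> - f \<omega> = 0"
    using assms by (subst integral_nonneg_eq_0_iff_AE[symmetric]) auto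
  then show ?thesis by auto
qed

lemma (in prob_space) AE_eq_expectation_if_normF_reciprocal_eq_1:
  assumes "\<And>i. i \<in> {1..d} \<Longrightarrow> integrable M (X i)"
    and "\<And>i. i \<in> {1..d} \<Longrightarrow> 0 < expectation (X i)"
    and "normF M X d (\<lambda>i. if i = 0 then 1 else 1 / expectation (X i)) = 1"
  shows "AE \<omega> in M. \<forall>i\<in>{1..d}. X i \<omega> = expectation (X i)"
proof -
  define c where "c = (\<lambda>i. expectation (X i))"
  define F where "F = (\<lambda>\<omega>. weighted_max d (\<lambda>i. if i = 0 then 1 else 1 / c i) (\<lambda>i. X i \<omega>))"
  have F_int: "integrable M F"
    unfolding F_def using assms(1) by (rule integrable_weighted_max)
  have EF: "expectation F = 1"
    using assms(3) unfolding normF_eq_integral_weighted_max F_def c_def .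
  have F_eq_1: "AE \<omega> in M. 1 = F \<omega>"
  proof (rule AE_eq_if_AE_le_integral_eq)
    show "AE \<omega> in M. 1 \<le> F \<omega>"
      using abs_first_le_weighted_max[of "\<lambda>i. if i = 0 then 1 else 1 / c i" d] by (simp add: F_def)
    show "expectation (\<lambda>\<omega>. 1) = expectation F"
      using EF by (simp add: prob_space)
  qed (simp_all add: F_int)
  have X_eq_c: "AE \<omega> in M. X i \<omega> = c i" if i: "i \<in> {1..d}" for i
  proof -
    have c_pos: "0 < c i" using assms(2) i by (simp add: c_def)
    have "AE \<omega> in M. X i \<omega> / c i = F \<omega>"
    proof (rule AE_eq_if_AE_le_integral_eq)
      show "integrable M (\<lambda>\<omega>. X i \<omega> / c i)" using assms(1) i by auto
      show "AE \<omega> in M. X i \<omega> / c i \<le> F \<omega>"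
        using weighted_term_le_weighted_max[OF i, of "\<lambda>i. if i = 0 then 1 else 1 / c i"] c_pos i
        by (intro AE_I2) (simp add: F_def)
      show "expectation (\<lambda>\<omega>. X i \<omega> / c i) = expectation F"
        using c_pos EF by (simp add: c_def)
    qed fact
    with F_eq_1 show ?thesis by eventually_elim (use c_pos in auto)
  qed
  show ?thesis
  proof (rule AE_finite_allI)
    show "finite {1..d}" by simp
  qed (use X_eq_c in \<open>simp add: c_def\<close>)
qed

lemma (in prob_space) normF_eq_norm_inf_c_if_AE_const:
  assumes "\<And>i. i \<in> {1..d} \<Longrightarrow> X i \<in> borel_measurable M"
    and "AE \<omega> in M. \<forall>i\<in>{1..d}. X i \<omega> = c i"
  shows "normF M X d x = norm_inf_c c d x"
proof -
  have "AE \<omega> in M. weighted_max d x (\<lambda>i. X i \<omega>) = weighted_max d x c"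
    using assms(2) by eventually_elim (auto intro: weighted_max_cong)
  then have "normF M X d x = expectation (\<lambda>\<omega>. weighted_max d x c)"
    unfolding normF_eq_integral_weighted_max using assms(1)
    by (intro integral_cong_AE borel_measurable_weighted_max) auto
  then show ?thesis by (simp add: norm_inf_c_eq_weighted_max prob_space)
qed

lemma norm_inf_c_reciprocal:
  assumes "\<And>i. i \<in> {1..d} \<Longrightarrow> 0 < c i"
  shows "norm_inf_c c d (\<lambda>i. if i = 0 then 1 else 1 / c i) = 1"
proof -
  have "{\<bar>(if i = 0 then 1 else 1 / c i)\<bar> * c i | i. i \<in> {1..d}} \<subseteq> {1}"
    using assms by force
  then show ?thesis
    unfolding norm_inf_c_def by (simp add: Un_absorb2 del: Un_insert_left)
qed

theorem proposition2p18:
  fixes M :: "'a measure" and X :: "nat \<Rightarrow> 'a \<Rightarrow> real" and d :: nat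
  assumes "prob_space M"
    and "\<And>i. i \<in> {1..d} \<Longrightarrow> X i \<in> borel_measurable M"
    and "\<And>i. i \<in> {1..d} \<Longrightarrow> AE \<omega> in M. X i \<omega> \<ge> 0"
    and "\<And>i. i \<in> {1..d} \<Longrightarrow> integrable M (X i)"
    and "\<And>i. i \<in> {1..d} \<Longrightarrow> 0 < integral\<^sup>L M (X i)"
  shows "normF M X d (\<lambda>i. if i = 0 then 1 else 1 / integral\<^sup>L M (X i)) = 1
     \<longleftrightarrow> (\<forall>x. normF M X d x = norm_inf_c (\<lambda>i. integral\<^sup>L M (X i)) d x)"
proof
  interpret prob_space M by fact
  show "\<forall>x. normF M X d x = norm_inf_c (\<lambda>i. expectation (X i)) d x"
    if "normF M X d (\<lambda>i. if i = 0 then 1 else 1 / expectation (X i)) = 1"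
    using AE_eq_expectation_if_normF_reciprocal_eq_1[OF assms(4,5) that]
    by (auto intro: normF_eq_norm_inf_c_if_AE_const assms(2))
  show "normF M X d (\<lambda>i. if i = 0 then 1 else 1 / expectation (X i)) = 1"
    if "\<forall>x. normF M X d x = norm_inf_c (\<lambda>i. expectation (X i)) d x"
    using that norm_inf_c_reciprocal[of d "\<lambda>i. expectation (X i)"] assms(5) by simp
qed

end
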